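(* Let $X$ be a path-connected space with base point $x_0$. Then $\mathbf{ltc}_n(X)=\mathbf{tc}_n(X)$ for every $n\ge1$, and $\mathbf{LTC}_n(X)=\mathbf{TC}_n(X)$ for every $n\ge 2$.
   Context: $I=[0,1]$. Path spaces with compact-open topology: $P_{x_0}X=\{f:I\to X\mid f(0)=x_0\}$, $\Omega_{x_0}X=\{f:I\to X\mid f(0)=f(1)=x_0\}$, $PX=\{f:I\to X\}$, $LX=\{f:I\to X\mid f(0)=f(1)\}$. Maps: $p_n:P_{x_0}X\to X^n$, $p_n(f)=(f(1/n),\dots,f((n-1)/n),f(1))$; $q_n:\Omega_{x_0}X\to X^n$, $q_n(f)=(f(1/(n+1)),\dots,f(n/(n+1)))$; $P_n:PX\to X^n$, $P_n(f)=(f(0),f(1/(n-1)),\dots,f((n-2)/(n-1)),f(1))$; $Q_n:LX\to X^n$, $Q_n(f)=(f(0),f(1/n),\dots,f((n-1)/n))$. For a map $p:E\to B$, the Schwarz genus $\mathbf{Sch}(p)$ is the least number $k$ of open sets $U_1,\dots,U_k$ covering $B$ such that over each $U_i$ there is a continuous map $s:U_i\to E$ with $p\circ s$ equal to the inclusion; $\mathbf{Sch}(p)=\infty$ if no such finite cover exists. Define $\mathbf{TC}_n(X)=\mathbf{Sch}(P_n)$ and $\mathbf{LTC}_n(X)=\mathbf{Sch}(Q_n)$ for $n\ge2$, and $\mathbf{tc}_n(X)=\mathbf{Sch}(p_n)$ and $\mathbf{ltc}_n(X)=\mathbf{Sch}(q_n)$ for $n\ge1$. *)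

theory Defs
  imports "HOL-Analysis.Analysis" "HOL-Library.Extended_Nat"
begin

abbreviation unit_I :: "real topology" where
  "unit_I \<equiv> top_of_set {0..1}"

text \<open>Compact-open topology on a set S of maps Y -> X: generated by the subbasic
  sets {f in S. f ` K \<subseteq> U}, K compact in Y, U open in X (K = {} gives S itself).\<close>
definition compact_open :: "'b topology \<Rightarrow> 'a topology \<Rightarrow> ('b \<Rightarrow> 'a) set \<Rightarrow> ('b \<Rightarrow> 'a) topology" where
  "compact_open Y X S = topology_generated_by
     {W. \<exists>K U. compactin Y K \<and> openin X U \<and> W = {f \<in> S. f ` K \<subseteq> U}}"

text \<open>Paths I -> X, represented extensionally (undefined outside [0,1]).\<close>
definition paths :: "'a topology \<Rightarrow> (real \<Rightarrow> 'a) set" where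
  "paths X = {f. continuous_map unit_I X f \<and> f \<in> extensional {0..1}}"

definition free_path_space :: "'a topology \<Rightarrow> (real \<Rightarrow> 'a) topology" where
  "free_path_space X = compact_open unit_I X (paths X)"

definition based_path_space :: "'a topology \<Rightarrow> 'a \<Rightarrow> (real \<Rightarrow> 'a) topology" where
  "based_path_space X x0 = compact_open unit_I X {f \<in> paths X. f 0 = x0}"

definition loop_space :: "'a topology \<Rightarrow> 'a \<Rightarrow> (real \<Rightarrow> 'a) topology" where
  "loop_space X x0 = compact_open unit_I X {f \<in> paths X. f 0 = x0 \<and> f 1 = x0}"

definition free_loop_space :: "'a topology \<Rightarrow> (real \<Rightarrow> 'a) topology" where
  "free_loop_space X = compact_open unit_I X {f \<in> paths X. f 0 = f 1}"

text \<open>X^n, with points the extensional functions {..<n} -> X; coordinate i (0-based).\<close>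
abbreviation power_space :: "'a topology \<Rightarrow> nat \<Rightarrow> (nat \<Rightarrow> 'a) topology" where
  "power_space X n \<equiv> product_topology (\<lambda>_. X) {..<n}"

definition p_map :: "nat \<Rightarrow> (real \<Rightarrow> 'a) \<Rightarrow> (nat \<Rightarrow> 'a)" where
  "p_map n f = restrict (\<lambda>i. f (real (Suc i) / real n)) {..<n}"

definition q_map :: "nat \<Rightarrow> (real \<Rightarrow> 'a) \<Rightarrow> (nat \<Rightarrow> 'a)" where
  "q_map n f = restrict (\<lambda>i. f (real (Suc i) / real (Suc n))) {..<n}"

definition P_map :: "nat \<Rightarrow> (real \<Rightarrow> 'a) \<Rightarrow> (nat \<Rightarrow> 'a)" where
  "P_map n f = restrict (\<lambda>i. f (real i / (real n - 1))) {..<n}"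

definition Q_map :: "nat \<Rightarrow> (real \<Rightarrow> 'a) \<Rightarrow> (nat \<Rightarrow> 'a)" where
  "Q_map n f = restrict (\<lambda>i. f (real i / real n)) {..<n}"

text \<open>Schwarz genus of p : E -> B: least k such that B is covered by k open sets,
  each admitting a continuous local section of p; \<infinity> if there is none.\<close>
definition schwarz_genus :: "'e topology \<Rightarrow> 'b topology \<Rightarrow> ('e \<Rightarrow> 'b) \<Rightarrow> enat" where
  "schwarz_genus E B p =
     (INF k \<in> {k::nat. \<exists>U::nat \<Rightarrow> 'b set.
         (\<forall>i<k. openin B (U i) \<and>
            (\<exists>s. continuous_map (subtopology B (U i)) E s \<and> (\<forall>x\<in>U i. p (s x) = x)))
         \<and> (\<Union>i<k. U i) = topspace B}. enat k)"

definition TC :: "'a topology \<Rightarrow> nat \<Rightarrow> enat" where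
  "TC X n = schwarz_genus (free_path_space X) (power_space X n) (P_map n)"

definition LTC :: "'a topology \<Rightarrow> nat \<Rightarrow> enat" where
  "LTC X n = schwarz_genus (free_loop_space X) (power_space X n) (Q_map n)"

definition tc :: "'a topology \<Rightarrow> 'a \<Rightarrow> nat \<Rightarrow> enat" where
  "tc X x0 n = schwarz_genus (based_path_space X x0) (power_space X n) (p_map n)"

definition ltc :: "'a topology \<Rightarrow> 'a \<Rightarrow> nat \<Rightarrow> enat" where
  "ltc X x0 n = schwarz_genus (loop_space X x0) (power_space X n) (q_map n)"

end

theory Submission
  imports Defs
begin

(* Both inequalities come from reparametrizations of I. For 0 < c < 1, precomposing with
   t \<mapsto> c t turns a loop into a path, and precomposing with the tent map that rises
   linearly from 0 at t = 0 to 1 at t = c and falls back to 0 at t = 1 turns a path into a loop.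
   With c = n/(n+1) (based case) resp. c = (n-1)/n (free case) the first map carries the sample
   points of p_n resp. P_n onto those of q_n resp. Q_n, and the tent map carries them back.
   Precomposition is continuous for the compact-open topology and commutes with the sampling
   maps, so local sections of either map yield local sections of the other over the same open
   sets. *)

lemma topspace_compact_open [simp]: "topspace (compact_open Y X S) = S"
proof -
  have "S \<in> {W. \<exists>K U. compactin Y K \<and> openin X U \<and> W = {f \<in> S. f ` K \<subseteq> U}}"
    by (auto intro!: exI[of _ "{}"])
  then show ?thesis
    unfolding compact_open_def by auto
qed

lemma openin_compact_open_subbasic:
  "compactin Y K \<Longrightarrow> openin X U \<Longrightarrow> openin (compact_open Y X S) {f \<in> S. f ` K \<subseteq> U}"
  unfolding compact_open_def by (rule topology_generated_by_Basis) blast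

lemma continuous_map_compact_open_precompose:
  fixes X :: "'a topology"
  assumes \<phi>: "continuous_map Z Y \<phi>"
    and maps_to: "\<And>f. f \<in> S \<Longrightarrow> restrict (f \<circ> \<phi>) (topspace Z) \<in> S'"
  shows "continuous_map (compact_open Y X S) (compact_open Z X S')
           (\<lambda>f. restrict (f \<circ> \<phi>) (topspace Z))"
  unfolding compact_open_def[of Z X S']
proof (rule continuous_on_generated_topo)
  fix W
  assume "W \<in> {W. \<exists>K U. compactin Z K \<and> openin X U \<and> W = {f \<in> S'. f ` K \<subseteq> U}}"
  then obtain K U where K: "compactin Z K" and U: "openin X U" and W: "W = {f \<in> S'. f ` K \<subseteq> U}"
    by blast
  have image_eq: "restrict (f \<circ> \<phi>) (topspace Z) ` K = f ` \<phi> ` K" for f :: "_ \<Rightarrow> 'a"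
  proof -
    have "restrict (f \<circ> \<phi>) (topspace Z) ` K = (f \<circ> \<phi>) ` K"
      using compactin_subset_topspace[OF K] by (intro image_cong) auto
    then show ?thesis
      by (simp add: image_comp)
  qed
  have "restrict (f \<circ> \<phi>) (topspace Z) \<in> W \<longleftrightarrow> f ` \<phi> ` K \<subseteq> U" if "f \<in> S" for f
    by (simp only: W mem_Collect_eq image_eq) (use maps_to[OF that] in blast)
  then have "(\<lambda>f. restrict (f \<circ> \<phi>) (topspace Z)) -` W \<inter> topspace (compact_open Y X S)
             = {f \<in> S. f ` \<phi> ` K \<subseteq> U}"
    unfolding topspace_compact_open by blast
  then show "openin (compact_open Y X S)
               ((\<lambda>f. restrict (f \<circ> \<phi>) (topspace Z)) -` W \<inter> topspace (compact_open Y X S))"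
    using openin_compact_open_subbasic[OF image_compactin[OF K \<phi>] U] by simp
next
  have "\<Union> {W. \<exists>K U. compactin Z K \<and> openin X U \<and> W = {f \<in> S'. f ` K \<subseteq> U}} = S'"
    using topspace_compact_open[of Z X S'] unfolding compact_open_def by simp
  then show "(\<lambda>f. restrict (f \<circ> \<phi>) (topspace Z)) ` topspace (compact_open Y X S)
               \<subseteq> \<Union> {W. \<exists>K U. compactin Z K \<and> openin X U \<and> W = {f \<in> S'. f ` K \<subseteq> U}}"
    using maps_to by auto
qed

lemma schwarz_genus_le_of_map_over:
  assumes T: "continuous_map E E' T"
    and over: "\<And>e. e \<in> topspace E \<Longrightarrow> p' (T e) = p e"
  shows "schwarz_genus E' B p' \<le> schwarz_genus E B p"
proof -
  have section_transfer:
    "openin B V \<and> (\<exists>s'. continuous_map (subtopology B V) E' s' \<and> (\<forall>x\<in>V. p' (s' x) = x))"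
    if "openin B V \<and> (\<exists>s. continuous_map (subtopology B V) E s \<and> (\<forall>x\<in>V. p (s x) = x))"
    for V
  proof -
    from that obtain s where V: "openin B V"
      and s: "continuous_map (subtopology B V) E s" "\<forall>x\<in>V. p (s x) = x"
      by blast
    have "continuous_map (subtopology B V) E' (T \<circ> s)"
      using s(1) T by (rule continuous_map_compose)
    moreover have "p' ((T \<circ> s) x) = x" if "x \<in> V" for x
    proof -
      have "s x \<in> topspace E"
        using continuous_map_image_subset_topspace[OF s(1)] openin_subset[OF V] that by auto
      then show ?thesis
        using over s(2) that by simp
    qed
    ultimately show ?thesis
      using V by blast
  qed
  show ?thesis
    unfolding schwarz_genus_def
  proof (rule INF_superset_mono[OF subsetI order.refl])
    fix k
    assume "k \<in> {k. \<exists>U. (\<forall>i<k. openin B (U i) \<and>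
                (\<exists>s. continuous_map (subtopology B (U i)) E s \<and> (\<forall>x\<in>U i. p (s x) = x)))
              \<and> (\<Union>i<k. U i) = topspace B}"
    then obtain U where sections:
        "\<forall>i<k. openin B (U i) \<and>
                (\<exists>s. continuous_map (subtopology B (U i)) E s \<and> (\<forall>x\<in>U i. p (s x) = x))"
      and cover: "(\<Union>i<k. U i) = topspace B"
      by blast
    show "k \<in> {k. \<exists>U. (\<forall>i<k. openin B (U i) \<and>
                (\<exists>s. continuous_map (subtopology B (U i)) E' s \<and> (\<forall>x\<in>U i. p' (s x) = x)))
              \<and> (\<Union>i<k. U i) = topspace B}"
      using section_transfer[of "U i" for i] sections cover by auto
  qed
qed

definition reparametrize :: "(real \<Rightarrow> real) \<Rightarrow> (real \<Rightarrow> 'a) \<Rightarrow> real \<Rightarrow> 'a" where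
  "reparametrize \<phi> f = restrict (f \<circ> \<phi>) {0..1}"

lemma reparametrize_apply [simp]: "t \<in> {0..1} \<Longrightarrow> reparametrize \<phi> f t = f (\<phi> t)"
  by (simp add: reparametrize_def)

lemma reparametrize_in_paths:
  assumes "continuous_map unit_I unit_I \<phi>" and "f \<in> paths X"
  shows "reparametrize \<phi> f \<in> paths X"
proof -
  have "continuous_map unit_I X (f \<circ> \<phi>)"
    using continuous_map_compose[OF assms(1)] assms(2) by (auto simp: paths_def)
  then have "continuous_map unit_I X (reparametrize \<phi> f)"
    by (rule continuous_map_eq) simp
  then show ?thesis
    by (simp add: paths_def reparametrize_def)
qed

lemma schwarz_genus_le_reparametrize:
  assumes \<phi>: "continuous_map unit_I unit_I \<phi>"
    and maps_to: "\<And>f. f \<in> S \<Longrightarrow> reparametrize \<phi> f \<in> S'"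
    and over: "\<And>f. f \<in> S \<Longrightarrow> p' (reparametrize \<phi> f) = p f"
  shows "schwarz_genus (compact_open unit_I X S') B p' \<le> schwarz_genus (compact_open unit_I X S) B p"
proof (rule schwarz_genus_le_of_map_over)
  show "continuous_map (compact_open unit_I X S) (compact_open unit_I X S') (reparametrize \<phi>)"
    using continuous_map_compact_open_precompose[OF \<phi>, of S S' X] maps_to
    by (simp add: reparametrize_def[abs_def])
qed (simp add: over)

lemma continuous_map_scale:
  assumes "0 \<le> c" "c \<le> 1"
  shows "continuous_map unit_I unit_I ((*) c)"
  using assms by (auto simp: mult_le_one intro!: continuous_intros)

definition tent :: "real \<Rightarrow> real \<Rightarrow> real" where
  "tent c t = min (t / c) ((1 - t) / (1 - c))"

lemma continuous_map_tent:
  assumes "0 < c" "c < 1"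
  shows "continuous_map unit_I unit_I (tent c)"
proof -
  have "continuous_on {0..1} (tent c)"
    unfolding tent_def using assms by (intro continuous_intros) auto
  moreover have "tent c t \<in> {0..1}" if "t \<in> {0..1}" for t
  proof -
    have "min (t / c) ((1 - t) / (1 - c)) \<le> 1"
      using that assms by (cases "t \<le> c") (auto simp: min_le_iff_disj divide_le_eq)
    then show ?thesis
      using that assms by (simp add: tent_def)
  qed
  ultimately show ?thesis
    by auto
qed

lemma tent_0: "c < 1 \<Longrightarrow> tent c 0 = 0"
  and tent_1: "0 < c \<Longrightarrow> tent c 1 = 0"
  by (simp_all add: tent_def min_def)

lemma tent_scale:
  assumes "0 < c" "c < 1" "t \<in> {0..1}"
  shows "tent c (c * t) = t"
proof -
  have "t \<le> (1 - c * t) / (1 - c)"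
    using assms by (simp add: le_divide_eq algebra_simps mult_left_le)
  then show ?thesis
    using assms by (simp add: tent_def min_def)
qed

lemma schwarz_genus_eq_reparametrize:
  assumes "continuous_map unit_I unit_I \<phi>" "continuous_map unit_I unit_I \<psi>"
    and "\<And>f. f \<in> S \<Longrightarrow> reparametrize \<phi> f \<in> S'" "\<And>f. f \<in> S \<Longrightarrow> p' (reparametrize \<phi> f) = p f"
    and "\<And>f. f \<in> S' \<Longrightarrow> reparametrize \<psi> f \<in> S" "\<And>f. f \<in> S' \<Longrightarrow> p (reparametrize \<psi> f) = p' f"
  shows "schwarz_genus (compact_open unit_I X S) B p = schwarz_genus (compact_open unit_I X S') B p'"
proof (rule antisym)
  show "schwarz_genus (compact_open unit_I X S) B p \<le> schwarz_genus (compact_open unit_I X S') B p'"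
    by (rule schwarz_genus_le_reparametrize[OF assms(2)]) (use assms(5,6) in auto)
  show "schwarz_genus (compact_open unit_I X S') B p' \<le> schwarz_genus (compact_open unit_I X S) B p"
    by (rule schwarz_genus_le_reparametrize[OF assms(1)]) (use assms(3,4) in auto)
qed

lemma reparametrize_tent_scale:
  assumes "0 < c" "c < 1" "t \<in> {0..1}"
  shows "reparametrize (tent c) f (c * t) = f t"
proof -
  have "c * t \<in> {0..1}"
    using assms by (auto simp: mult_le_one)
  then show ?thesis
    using assms by (simp add: tent_scale)
qed

lemma p_map_reparametrize_scale:
  assumes "n \<ge> 1"
  shows "p_map n (reparametrize ((*) (real n / real (Suc n))) f) = q_map n f"
  unfolding p_map_def q_map_def
proof (rule restrict_ext)
  fix i assume "i \<in> {..<n}"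
  then have "real (Suc i) / real n \<in> {0..1}"
    by (auto simp del: of_nat_Suc)
  moreover have "real n / real (Suc n) * (real (Suc i) / real n) = real (Suc i) / real (Suc n)"
    using assms by (simp del: of_nat_Suc)
  ultimately show "reparametrize ((*) (real n / real (Suc n))) f (real (Suc i) / real n)
                   = f (real (Suc i) / real (Suc n))"
    by simp
qed

lemma q_map_reparametrize_tent:
  assumes "n \<ge> 1"
  shows "q_map n (reparametrize (tent (real n / real (Suc n))) f) = p_map n f"
  unfolding p_map_def q_map_def
proof (rule restrict_ext)
  fix i assume "i \<in> {..<n}"
  then have "real (Suc i) / real n \<in> {0..1}"
    by (auto simp del: of_nat_Suc)
  moreover have sample: "real (Suc i) / real (Suc n) = real n / real (Suc n) * (real (Suc i) / real n)"
    using assms by (simp del: of_nat_Suc)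
  ultimately show "reparametrize (tent (real n / real (Suc n))) f (real (Suc i) / real (Suc n))
                   = f (real (Suc i) / real n)"
    unfolding sample using assms by (intro reparametrize_tent_scale) auto
qed

lemma P_map_reparametrize_scale:
  assumes "n \<ge> 2"
  shows "P_map n (reparametrize ((*) ((real n - 1) / real n)) f) = Q_map n f"
  unfolding P_map_def Q_map_def
proof (rule restrict_ext)
  fix i assume "i \<in> {..<n}"
  then have "real i / (real n - 1) \<in> {0..1}"
    using assms by (auto simp: field_simps)
  moreover have "(real n - 1) / real n * (real i / (real n - 1)) = real i / real n"
    using assms by simp
  ultimately show "reparametrize ((*) ((real n - 1) / real n)) f (real i / (real n - 1))
                   = f (real i / real n)"
    by simp
qed

lemma Q_map_reparametrize_tent:
  assumes "n \<ge> 2"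
  shows "Q_map n (reparametrize (tent ((real n - 1) / real n)) f) = P_map n f"
  unfolding P_map_def Q_map_def
proof (rule restrict_ext)
  fix i assume "i \<in> {..<n}"
  then have "real i / (real n - 1) \<in> {0..1}"
    using assms by (auto simp: field_simps)
  moreover have sample: "real i / real n = (real n - 1) / real n * (real i / (real n - 1))"
    using assms by simp
  ultimately show "reparametrize (tent ((real n - 1) / real n)) f (real i / real n)
                   = f (real i / (real n - 1))"
    unfolding sample using assms by (intro reparametrize_tent_scale) auto
qed

theorem mainTheorem3:
  fixes X :: "'a topology" and x0 :: 'a
  assumes "path_connected_space X" and "x0 \<in> topspace X"
  shows "(\<forall>n\<ge>1. ltc X x0 n = tc X x0 n) \<and> (\<forall>n\<ge>2. LTC X n = TC X n)"
proof (intro conjI allI impI)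
  fix n :: nat assume n: "n \<ge> 1"
  define c where "c = real n / real (Suc n)"
  have c: "0 < c" "c < 1"
    using n by (auto simp: c_def)
  have scale: "continuous_map unit_I unit_I ((*) c)"
    using c by (intro continuous_map_scale) auto
  have tent: "continuous_map unit_I unit_I (tent c)"
    using c by (rule continuous_map_tent)
  show "ltc X x0 n = tc X x0 n"
    unfolding ltc_def tc_def loop_space_def based_path_space_def
    by (rule schwarz_genus_eq_reparametrize[OF scale tent])
       (use c in \<open>auto simp: reparametrize_in_paths[OF scale] reparametrize_in_paths[OF tent] tent_0 tent_1
          p_map_reparametrize_scale[OF n, folded c_def] q_map_reparametrize_tent[OF n, folded c_def]\<close>)
next
  fix n :: nat assume n: "n \<ge> 2"
  define c where "c = (real n - 1) / real n"
  have c: "0 < c" "c < 1"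
    using n by (auto simp: c_def)
  have scale: "continuous_map unit_I unit_I ((*) c)"
    using c by (intro continuous_map_scale) auto
  have tent: "continuous_map unit_I unit_I (tent c)"
    using c by (rule continuous_map_tent)
  show "LTC X n = TC X n"
    unfolding LTC_def TC_def free_loop_space_def free_path_space_def
    by (rule schwarz_genus_eq_reparametrize[OF scale tent])
       (use c in \<open>auto simp: reparametrize_in_paths[OF scale] reparametrize_in_paths[OF tent] tent_0 tent_1
          P_map_reparametrize_scale[OF n, folded c_def] Q_map_reparametrize_tent[OF n, folded c_def]\<close>)
qed

end
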